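(* Let $(\mathcal{A},\cdot,\alpha)$ be a commutative Hom-associative algebra with a derivation $D$ such that $\alpha D=D\alpha$, and let $\lambda\in\mathbb{C}$ be fixed. Define $x\circ y=x\cdot D(y)+\lambda\, x\cdot y$ and $[x,y]^-=x\cdot D(y)-y\cdot D(x)$ for $x,y\in\mathcal{A}$. Then $(\mathcal{A},[\cdot,\cdot]^-,\circ,\alpha)$ is a Hom Gel'fand-Dorfman bialgebra.
   Context: All vector spaces are over $\mathbb{C}$. A Hom-associative algebra is a vector space $\mathcal{A}$ with a bilinear map $\cdot$ and linear map $\alpha$ such that $\alpha(x)\cdot(y\cdot z)=(x\cdot y)\cdot\alpha(z)$ for all $x,y,z$; it is commutative if $x\cdot y=y\cdot x$. A derivation is a linear map $D$ with $D(x\cdot y)=D(x)\cdot y+x\cdot D(y)$. A Hom-Novikov algebra is a vector space with a bilinear operation $\circ$ and a linear endomorphism $\alpha$ such that $(x\circ y)\circ\alpha(z)-\alpha(x)\circ(y\circ z)=(y\circ x)\circ\alpha(z)-\alpha(y)\circ(x\circ z)$ and $(x\circ y)\circ\alpha(z)=(x\circ z)\circ\alpha(y)$. A Hom-Lie algebra is a vector space with a bilinear map $[\cdot,\cdot]$ and linear map $\alpha$ with $[x,y]=-[y,x]$ and $[[x,y],\alpha(z)]+[[y,z],\alpha(x)]+[[z,x],\alpha(y)]=0$. A Hom Gel'fand-Dorfman bialgebra is a vector space $\mathcal{A}$ with a linear endomorphism $\alpha$ and two bilinear operations $[\cdot,\cdot],\circ$ such that $(\mathcal{A},[\cdot,\cdot],\alpha)$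 is a Hom-Lie algebra, $(\mathcal{A},\circ,\alpha)$ is a Hom-Novikov algebra, and $[x\circ y,\alpha(z)]-[x\circ z,\alpha(y)]+[x,y]\circ\alpha(z)-[x,z]\circ\alpha(y)-\alpha(x)\circ[y,z]=0$ for all $x,y,z$. *)

theory Defs
  imports Complex_Main
begin

definition cbilinear :: "(complex \<Rightarrow> 'a::ab_group_add \<Rightarrow> 'a) \<Rightarrow> ('a \<Rightarrow> 'a \<Rightarrow> 'a) \<Rightarrow> bool" where
  "cbilinear smul m \<longleftrightarrow> (\<forall>x. Vector_Spaces.linear smul smul (m x)) \<and> (\<forall>y. Vector_Spaces.linear smul smul (\<lambda>x. m x y))"

definition hom_assoc_algebra :: "(complex \<Rightarrow> 'a::ab_group_add \<Rightarrow> 'a) \<Rightarrow> ('a \<Rightarrow> 'a \<Rightarrow> 'a) \<Rightarrow> ('a \<Rightarrow> 'a) \<Rightarrow> bool" where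
  "hom_assoc_algebra smul m \<alpha> \<longleftrightarrow> vector_space smul \<and> cbilinear smul m \<and> Vector_Spaces.linear smul smul \<alpha> \<and>
     (\<forall>x y z. m (\<alpha> x) (m y z) = m (m x y) (\<alpha> z))"

definition commutative_op :: "('a \<Rightarrow> 'a \<Rightarrow> 'a) \<Rightarrow> bool" where
  "commutative_op m \<longleftrightarrow> (\<forall>x y. m x y = m y x)"

definition is_derivation :: "(complex \<Rightarrow> 'a::ab_group_add \<Rightarrow> 'a) \<Rightarrow> ('a \<Rightarrow> 'a \<Rightarrow> 'a) \<Rightarrow> ('a \<Rightarrow> 'a) \<Rightarrow> bool" where
  "is_derivation smul m D \<longleftrightarrow> Vector_Spaces.linear smul smul D \<and> (\<forall>x y. D (m x y) = m (D x) y + m x (D y))"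

definition hom_novikov :: "(complex \<Rightarrow> 'a::ab_group_add \<Rightarrow> 'a) \<Rightarrow> ('a \<Rightarrow> 'a \<Rightarrow> 'a) \<Rightarrow> ('a \<Rightarrow> 'a) \<Rightarrow> bool" where
  "hom_novikov smul c \<alpha> \<longleftrightarrow> vector_space smul \<and> cbilinear smul c \<and> Vector_Spaces.linear smul smul \<alpha> \<and>
     (\<forall>x y z. c (c x y) (\<alpha> z) - c (\<alpha> x) (c y z) = c (c y x) (\<alpha> z) - c (\<alpha> y) (c x z)) \<and>
     (\<forall>x y z. c (c x y) (\<alpha> z) = c (c x z) (\<alpha> y))"

definition hom_lie :: "(complex \<Rightarrow> 'a::ab_group_add \<Rightarrow> 'a) \<Rightarrow> ('a \<Rightarrow> 'a \<Rightarrow> 'a) \<Rightarrow> ('a \<Rightarrow> 'a) \<Rightarrow> bool" where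
  "hom_lie smul b \<alpha> \<longleftrightarrow> vector_space smul \<and> cbilinear smul b \<and> Vector_Spaces.linear smul smul \<alpha> \<and>
     (\<forall>x y. b x y = - b y x) \<and>
     (\<forall>x y z. b (b x y) (\<alpha> z) + b (b y z) (\<alpha> x) + b (b z x) (\<alpha> y) = 0)"

definition hom_GD_bialgebra :: "(complex \<Rightarrow> 'a::ab_group_add \<Rightarrow> 'a) \<Rightarrow> ('a \<Rightarrow> 'a \<Rightarrow> 'a) \<Rightarrow> ('a \<Rightarrow> 'a \<Rightarrow> 'a) \<Rightarrow> ('a \<Rightarrow> 'a) \<Rightarrow> bool" where
  "hom_GD_bialgebra smul b c \<alpha> \<longleftrightarrow> hom_lie smul b \<alpha> \<and> hom_novikov smul c \<alpha> \<and>
     (\<forall>x y z. b (c x y) (\<alpha> z) - b (c x z) (\<alpha> y) + c (b x y) (\<alpha> z) - c (b x z) (\<alpha> y) - c (\<alpha> x) (b y z) = 0)"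

end

theory Submission
  imports Defs
begin

text \<open>Expanding with the Leibniz rule (and \<open>D \<alpha> = \<alpha> D\<close>), every term of the required
  identities becomes a triple product \<open>(u v) \<alpha>(w)\<close>, where \<open>u, v, w\<close> are iterated
  derivatives of \<open>x, y, z\<close>. In a commutative Hom-associative algebra this product is
  symmetric in \<open>u, v, w\<close>, because \<open>(u v) \<alpha>(w) = \<alpha>(u) (v w)\<close>; once all triple
  products are brought to a normal form the identities cancel term by term.\<close>

locale comm_hom_assoc_derivation = vector_space smul
  for smul :: "complex \<Rightarrow> 'a::ab_group_add \<Rightarrow> 'a" +
  fixes m :: "'a \<Rightarrow> 'a \<Rightarrow> 'a" and \<alpha> D :: "'a \<Rightarrow> 'a"
  assumes bilinear: "cbilinear smul m"
    and linear_\<alpha>: "Vector_Spaces.linear smul smul \<alpha>"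
    and hom_assoc: "m (\<alpha> x) (m y z) = m (m x y) (\<alpha> z)"
    and commute: "m x y = m y x"
    and linear_D: "Vector_Spaces.linear smul smul D"
    and Leibniz: "D (m x y) = m (D x) y + m x (D y)"
    and D_\<alpha>: "D (\<alpha> x) = \<alpha> (D x)"
begin

lemma m_add_right: "m x (a + b) = m x a + m x b"
  and m_scale_right: "m x (smul c a) = smul c (m x a)"
  and m_add_left: "m (a + b) x = m a x + m b x"
  and m_scale_left: "m (smul c a) x = smul c (m a x)"
  using bilinear unfolding cbilinear_def Vector_Spaces.linear_iff by auto

lemma D_add: "D (a + b) = D a + D b"
  and D_scale: "D (smul c a) = smul c (D a)"
  using linear_D unfolding Vector_Spaces.linear_iff by auto

lemmas m_diff_right = additive.diff[OF additive.intro, OF m_add_right]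
  and m_diff_left = additive.diff[OF additive.intro, where f = "\<lambda>a. m a x" for x, OF m_add_left]
  and D_diff = additive.diff[OF additive.intro, OF D_add]

definition triple :: "'a \<Rightarrow> 'a \<Rightarrow> 'a \<Rightarrow> 'a" where
  "triple x y z = m (m x y) (\<alpha> z)"

lemma triple_swap12: "triple x y z = triple y x z"
  by (simp add: triple_def commute)

lemma triple_swap23: "triple x y z = triple x z y"
proof -
  have "triple x y z = m (\<alpha> x) (m y z)"
    by (simp add: triple_def hom_assoc)
  also have "\<dots> = m (\<alpha> x) (m z y)"
    by (simp add: commute)
  also have "\<dots> = triple x z y"
    by (simp add: triple_def hom_assoc)
  finally show ?thesis .
qed

lemma m_m_\<alpha>_eq_triple: "m (m x y) (\<alpha> z) = triple x y z"
  by (simp add: triple_def)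

lemma m_\<alpha>_m_eq_triple: "m (\<alpha> x) (m y z) = triple x y z"
  by (simp add: triple_def hom_assoc)

lemma m_\<alpha>_m_eq_triple': "m (\<alpha> z) (m x y) = triple x y z"
  using m_\<alpha>_m_eq_triple triple_swap12 triple_swap23 by metis

lemmas triple_normalize =
  m_add_right m_scale_right m_add_left m_scale_left D_add D_scale
  m_diff_right m_diff_left D_diff Leibniz D_\<alpha>
  m_m_\<alpha>_eq_triple m_\<alpha>_m_eq_triple m_\<alpha>_m_eq_triple' triple_swap12 triple_swap23
  scale_left_commute

lemma linear_endoI:
  assumes "\<And>x y. f (x + y) = f x + f y" and "\<And>c x. f (smul c x) = smul c (f x)"
  shows "Vector_Spaces.linear smul smul f"
  using assms by (simp add: Vector_Spaces.linear_iff vector_space_axioms)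

definition bracket :: "'a \<Rightarrow> 'a \<Rightarrow> 'a" where
  "bracket x y = m x (D y) - m y (D x)"

definition circ :: "complex \<Rightarrow> 'a \<Rightarrow> 'a \<Rightarrow> 'a" where
  "circ lam x y = m x (D y) + smul lam (m x y)"

lemma cbilinear_bracket: "cbilinear smul bracket"
  unfolding cbilinear_def bracket_def
  by (intro allI conjI linear_endoI) (simp_all add: triple_normalize algebra_simps)

lemma cbilinear_circ: "cbilinear smul (circ lam)"
  unfolding cbilinear_def circ_def
  by (intro allI conjI linear_endoI) (simp_all add: triple_normalize algebra_simps)

lemma bracket_skew: "bracket x y = - bracket y x"
  by (simp add: bracket_def)

lemma bracket_hom_Jacobi:
  "bracket (bracket x y) (\<alpha> z) + bracket (bracket y z) (\<alpha> x) + bracket (bracket z x) (\<alpha> y) = 0"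
  by (simp add: bracket_def triple_normalize algebra_simps)

lemma circ_hom_left_symmetric:
  "circ lam (circ lam x y) (\<alpha> z) - circ lam (\<alpha> x) (circ lam y z)
     = circ lam (circ lam y x) (\<alpha> z) - circ lam (\<alpha> y) (circ lam x z)"
  by (simp add: circ_def triple_normalize algebra_simps)

lemma circ_hom_right_commutative:
  "circ lam (circ lam x y) (\<alpha> z) = circ lam (circ lam x z) (\<alpha> y)"
  by (simp add: circ_def triple_normalize algebra_simps)

lemma bracket_circ_compatible:
  "bracket (circ lam x y) (\<alpha> z) - bracket (circ lam x z) (\<alpha> y) + circ lam (bracket x y) (\<alpha> z)
     - circ lam (bracket x z) (\<alpha> y) - circ lam (\<alpha> x) (bracket y z) = 0"
  by (simp add: bracket_def circ_def triple_normalize algebra_simps)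

lemma hom_lie_bracket: "hom_lie smul bracket \<alpha>"
  unfolding hom_lie_def
  using vector_space_axioms cbilinear_bracket linear_\<alpha> bracket_skew bracket_hom_Jacobi by blast

lemma hom_novikov_circ: "hom_novikov smul (circ lam) \<alpha>"
  unfolding hom_novikov_def
  using vector_space_axioms cbilinear_circ linear_\<alpha> circ_hom_left_symmetric circ_hom_right_commutative
  by blast

lemma hom_GD_bialgebra: "hom_GD_bialgebra smul bracket (circ lam) \<alpha>"
  unfolding hom_GD_bialgebra_def
  using hom_lie_bracket hom_novikov_circ bracket_circ_compatible by blast

end

theorem theorem3p8:
  fixes smul :: "complex \<Rightarrow> 'a::ab_group_add \<Rightarrow> 'a"
    and m :: "'a \<Rightarrow> 'a \<Rightarrow> 'a" and \<alpha> D :: "'a \<Rightarrow> 'a" and lam :: complex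
  assumes "hom_assoc_algebra smul m \<alpha>"
    and "commutative_op m"
    and "is_derivation smul m D"
    and "\<alpha> \<circ> D = D \<circ> \<alpha>"
  shows "hom_GD_bialgebra smul
           (\<lambda>x y. m x (D y) - m y (D x))
           (\<lambda>x y. m x (D y) + smul lam (m x y))
           \<alpha>"
proof -
  interpret comm_hom_assoc_derivation smul m \<alpha> D
    using assms unfolding hom_assoc_algebra_def commutative_op_def is_derivation_def
    by (intro comm_hom_assoc_derivation.intro comm_hom_assoc_derivation_axioms.intro)
      (blast | metis comp_apply)+
  show ?thesis
    using hom_GD_bialgebra[of lam] by (simp only: bracket_def[abs_def] circ_def[abs_def])
qed

end
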